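(* Let $N\ge2$, $d\ge2$, and consider gates on $(\mathbb{C}^d)^{\otimes N}$. Then $$\langle\varepsilon_\tau\rangle_{O(d^N)}=\frac{[2^N(d^N+1)-2(d+1)^N][d^N(d+1)^N-2^N]}{(2^{N-1}-1)(d^{2N}+d^N-2)(d+1)^N}$$ and $$\langle\varepsilon_\tau\rangle_{U(d^N)}=\frac{2^N(d^N+1)-2(d+1)^N}{(2^{N-1}-1)(d^N+1)}.$$
   Context: For a pure state $|\psi\rangle$ on $(\mathbb{C}^d)^{\otimes N}$ and an unordered bipartition $A|B$ of the $N$ parties into disjoint nonempty sets, $\tau_{A|B}(|\psi\rangle)=2\big(1-\mathrm{Tr}(\mathrm{Tr}_B|\psi\rangle\langle\psi|)^2\big)$; the one-tangle is $\tau_1=\frac{1}{2^{N-1}-1}\sum_{A|B}\tau_{A|B}$, summed over all $2^{N-1}-1$ unordered bipartitions. The entangling power of a unitary $U$ is $\varepsilon_\tau(U)=\langle\tau_1(U|\psi_1\rangle\cdots|\psi_N\rangle)\rangle$, averaged over product states with each $|\psi_i\rangle$ uniform on the unit sphere of $\mathbb{C}^d$. $\langle\cdot\rangle_{O(d^N)}$, $\langle\cdot\rangle_{U(d^N)}$ denote Haar averages over the orthogonal and unitary groups of size $d^N$. *)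

theory Defs
  imports "HOL-Probability.Probability"
begin

definition cadj :: "complex^'n^'m \<Rightarrow> complex^'m^'n" where
  "cadj A = (\<chi> i j. cnj (A $ j $ i))"

definition unitary_mat :: "complex^'n^'n \<Rightarrow> bool" where
  "unitary_mat U \<longleftrightarrow> U ** cadj U = mat 1 \<and> cadj U ** U = mat 1"

definition cmat :: "real^'n^'m \<Rightarrow> complex^'n^'m" where
  "cmat Q = (\<chi> i j. complex_of_real (Q $ i $ j))"

text \<open>Haar probability measure on the unitary group U(n) (characterised by being a
  left-invariant Borel probability measure concentrated on U(n); unique).\<close>
definition is_haar_unitary :: "(complex^'n^'n) measure \<Rightarrow> bool" where
  "is_haar_unitary M \<longleftrightarrow> prob_space M \<and> sets M = sets borel \<and>
     (AE U in M. unitary_mat U) \<and>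
     (\<forall>V. unitary_mat V \<longrightarrow> distr M borel (\<lambda>U. V ** U) = M)"

definition is_haar_orth :: "(real^'n^'n) measure \<Rightarrow> bool" where
  "is_haar_orth M \<longleftrightarrow> prob_space M \<and> sets M = sets borel \<and>
     (AE Q in M. orthogonal_matrix Q) \<and>
     (\<forall>V. orthogonal_matrix V \<longrightarrow> distr M borel (\<lambda>Q. V ** Q) = M)"

text \<open>Uniform probability measure on the unit sphere of C^d (the unique unitarily
  invariant Borel probability measure on the sphere).\<close>
definition is_unif_sphere :: "(complex^'d) measure \<Rightarrow> bool" where
  "is_unif_sphere S \<longleftrightarrow> prob_space S \<and> sets S = sets borel \<and>
     (AE x in S. norm x = 1) \<and>
     (\<forall>V. unitary_mat V \<longrightarrow> distr S borel (\<lambda>x. V *v x) = S)"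

text \<open>Parties are indexed by the finite type 'i (N = CARD('i)), local basis by 'd
  (d = CARD('d)); computational basis of the N-partite space is 'i \<Rightarrow> 'd.\<close>
definition prod_state :: "('i::finite \<Rightarrow> complex^'d::finite) \<Rightarrow> complex^('i \<Rightarrow> 'd)" where
  "prod_state \<phi> = (\<chi> x. \<Prod>i\<in>UNIV. \<phi> i $ x i)"

definition merge :: "'i set \<Rightarrow> ('i \<Rightarrow> 'd) \<Rightarrow> ('i \<Rightarrow> 'd) \<Rightarrow> ('i \<Rightarrow> 'd)" where
  "merge A x y = (\<lambda>i. if i \<in> A then x i else y i)"

text \<open>Tr(rho_A^2) with rho_A = Tr_B |psi><psi|, B = complement of A.
  rho_A(a,a') = sum_b psi(a b) cnj(psi(a' b)).\<close>
definition purity :: "'i::finite set \<Rightarrow> complex^('i \<Rightarrow> 'd::finite) \<Rightarrow> complex" where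
  "purity A \<psi> =
    (\<Sum>a\<in>PiE A (\<lambda>_. UNIV). \<Sum>a'\<in>PiE A (\<lambda>_. UNIV).
       (\<Sum>b\<in>PiE (- A) (\<lambda>_. UNIV). \<psi> $ merge A a b * cnj (\<psi> $ merge A a' b)) *
       (\<Sum>b\<in>PiE (- A) (\<lambda>_. UNIV). \<psi> $ merge A a' b * cnj (\<psi> $ merge A a b)))"

definition tau_bip :: "'i::finite set \<Rightarrow> complex^('i \<Rightarrow> 'd::finite) \<Rightarrow> real" where
  "tau_bip A \<psi> = 2 * (1 - Re (purity A \<psi>))"

text \<open>One-tangle: average over the 2^(N-1)-1 unordered bipartitions {A, -A}.
  Each unordered bipartition corresponds to exactly two proper nonempty subsets A,
  hence the factor 1/2 (tau_{A|B} is symmetric in A,B).\<close>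
definition one_tangle :: "complex^('i::finite \<Rightarrow> 'd::finite) \<Rightarrow> real" where
  "one_tangle \<psi> =
     ((\<Sum>A\<in>{A. A \<noteq> {} \<and> A \<noteq> (UNIV::'i set)}. tau_bip A \<psi>) / 2)
       / (2 ^ (CARD('i) - 1) - 1)"

definition ent_power ::
  "(complex^'d::finite) measure \<Rightarrow> complex^('i::finite \<Rightarrow> 'd)^('i \<Rightarrow> 'd) \<Rightarrow> real" where
  "ent_power S U = (\<integral>\<phi>. one_tangle (U *v prod_state \<phi>) \<partial>(PiM (UNIV::'i set) (\<lambda>_. S)))"

end

theory Submission
  imports Defs
begin

(* Fix an input psi and average the one-tangle of G psi over a Haar-random gate G: only the law
   of the random unit vector G psi matters, and that law is invariant under real orthogonal maps.
   For such a law every quartic moment E[x_p cnj(x_q) x_r cnj(x_s)] is forced by the symmetry: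
   coordinate reflections kill the moments whose indices do not pair up, permutations identify the
   paired ones, and a rotation by pi/4 in a coordinate plane relates the diagonal moment to them.
   The normalisation leaves one free parameter, t = E |sum_p x_p^2|^2.  The purity of a reduced
   state is a sum of quartic moments, so the mean one-tangle is (d^N - t) * tangle_coeff N d.
   For the unitary group a phase on one coordinate forces t = 2 / (d^N + 1).  For the orthogonal
   group t = |psi^T psi|^2 is constant on the orbit of psi; averaged over product inputs it
   factorises into N copies of the single-qudit unitary value 2 / (d + 1). *)

section \<open>Real matrices acting on complex vectors\<close>

lemma cmat_vec_nth: "(cmat Q *v x) $ i = (\<Sum>j\<in>UNIV. complex_of_real (Q $ i $ j) * x $ j)"
  by (simp add: cmat_def matrix_vector_mult_def)

lemma cmat_mult: "cmat A ** cmat B = cmat (A ** B)"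
  by (simp add: cmat_def matrix_matrix_mult_def vec_eq_iff)

lemma cmat_mat_1: "cmat (mat 1) = mat 1"
  by (simp add: cmat_def mat_def vec_eq_iff)

lemma cadj_cmat: "cadj (cmat Q) = cmat (transpose Q)"
  by (simp add: cadj_def cmat_def transpose_def)

lemma transpose_cmat: "transpose (cmat Q) = cmat (transpose Q)"
  by (simp add: cmat_def transpose_def)

lemma unitary_mat_cmat: "orthogonal_matrix Q \<Longrightarrow> unitary_mat (cmat Q)"
  unfolding unitary_mat_def orthogonal_matrix_def cadj_cmat cmat_mult by (simp add: cmat_mat_1)

lemma sum_matrix_vector_mult_mult:
  fixes A :: "'a::comm_semiring_1^'n::finite^'m::finite"
  shows "(\<Sum>i\<in>UNIV. (A *v x) $ i * y $ i) = (\<Sum>j\<in>UNIV. x $ j * (transpose A *v y) $ j)"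
  by (simp add: matrix_vector_mult_def transpose_def sum_distrib_left sum_distrib_right mult_ac)
    (rule sum.swap)

lemma orthogonal_matrix_sum_mult:
  assumes "orthogonal_matrix Q"
  shows "(\<Sum>i\<in>UNIV. (cmat Q *v x) $ i * (cmat Q *v y) $ i) = (\<Sum>i\<in>UNIV. x $ i * y $ i)"
proof -
  have "transpose (cmat Q) ** cmat Q = mat 1"
    using assms by (simp add: transpose_cmat cmat_mult orthogonal_matrix cmat_mat_1)
  then show ?thesis
    by (simp add: sum_matrix_vector_mult_mult matrix_vector_mul_assoc)
qed

lemma of_real_norm_sq_vec: "complex_of_real ((norm (x::complex^'n::finite))^2) = (\<Sum>i\<in>UNIV. x $ i * cnj (x $ i))"
proof -
  have "(norm x)^2 = (\<Sum>i\<in>UNIV. (cmod (x $ i))^2)"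
    by (simp add: norm_vec_def L2_set_def sum_nonneg)
  then have "complex_of_real ((norm x)^2) = (\<Sum>i\<in>UNIV. complex_of_real ((cmod (x $ i))^2))"
    by simp
  then show ?thesis by (simp only: complex_norm_square)
qed

lemma norm_unitary_mult:
  assumes "unitary_mat U"
  shows "norm (U *v x) = norm x"
proof -
  have cnj: "transpose U *v (\<chi> i. cnj ((U *v x) $ i)) = (\<chi> j. cnj ((cadj U *v (U *v x)) $ j))"
    by (simp add: vec_eq_iff matrix_vector_mult_def transpose_def cadj_def)
  have "cadj U *v (U *v x) = x"
    using assms by (simp add: unitary_mat_def matrix_vector_mul_assoc)
  then have "complex_of_real ((norm (U *v x))^2) = complex_of_real ((norm x)^2)"
    unfolding of_real_norm_sq_vec
    using sum_matrix_vector_mult_mult[of U x "\<chi> i. cnj ((U *v x) $ i)"] cnj by simp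
  then have "(norm (U *v x))^2 = (norm x)^2" by (simp only: of_real_eq_iff)
  then show ?thesis by (simp add: power2_eq_iff_nonneg)
qed

lemma continuous_on_cmat [continuous_intros]:
  "continuous_on S f \<Longrightarrow> continuous_on S (\<lambda>x. cmat (f x))"
  unfolding cmat_def by (intro continuous_intros)

lemma continuous_on_matrix_vector_mult [continuous_intros]:
  fixes f :: "'a::topological_space \<Rightarrow> 'b::real_normed_field^'n::finite^'m::finite"
  shows "continuous_on S f \<Longrightarrow> continuous_on S g \<Longrightarrow> continuous_on S (\<lambda>x. f x *v g x)"
  unfolding matrix_vector_mult_def by (intro continuous_intros)

lemma continuous_on_matrix_matrix_mult [continuous_intros]:
  fixes f :: "'a::topological_space \<Rightarrow> 'b::real_normed_field^'n::finite^'m::finite"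
  shows "continuous_on S f \<Longrightarrow> continuous_on S g \<Longrightarrow> continuous_on S (\<lambda>x. f x ** g x)"
  unfolding matrix_matrix_mult_def by (intro continuous_intros)

section \<open>Integrals against invariant measures\<close>

lemma continuous_on_bounded_unit_ball:
  fixes f :: "'a::euclidean_space \<Rightarrow> 'b::real_normed_vector"
  assumes "continuous_on UNIV f"
  obtains K where "\<And>x. norm x \<le> 1 \<Longrightarrow> norm (f x) \<le> K"
proof -
  have "compact (f ` cball 0 1)"
    by (rule compact_continuous_image) (use assms continuous_on_subset in auto)
  then obtain K where "\<forall>y\<in>f ` cball 0 1. norm y \<le> K"
    using compact_imp_bounded bounded_iff by metis
  then show ?thesis using that[of K] by (simp add: mem_cball_0)
qed

lemma integrable_continuous_on_unit_ball:
  fixes f :: "'a::euclidean_space \<Rightarrow> 'b::{banach,second_countable_topology}"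
  assumes "prob_space M" "sets M = sets borel" "AE x in M. norm x \<le> 1" "continuous_on UNIV f"
  shows "integrable M f"
proof -
  obtain K where K: "\<And>x. norm x \<le> 1 \<Longrightarrow> norm (f x) \<le> K"
    using continuous_on_bounded_unit_ball[OF assms(4)] by blast
  have "f \<in> borel_measurable M"
    using borel_measurable_continuous_onI[OF assms(4)] measurable_cong_sets[OF assms(2) refl] by blast
  moreover have "AE x in M. norm (f x) \<le> K"
    using assms(3) by (rule AE_mp) (auto intro: K)
  ultimately show ?thesis
    using finite_measure.integrable_const_bound prob_space.finite_measure[OF assms(1)] by blast
qed

lemma integral_distr_invariant:
  fixes f :: "'a::topological_space \<Rightarrow> 'b::{banach,second_countable_topology}"
  assumes "sets M = sets borel" "distr M borel T = M"
    and "T \<in> borel_measurable borel" "f \<in> borel_measurable borel"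
  shows "(\<integral>x. f (T x) \<partial>M) = integral\<^sup>L M f"
proof -
  have "T \<in> M \<rightarrow>\<^sub>M borel" using assms(3) measurable_cong_sets[OF assms(1) refl] by blast
  then have "(\<integral>x. f (T x) \<partial>M) = integral\<^sup>L (distr M borel T) f"
    using assms(4) by (simp add: integral_distr)
  then show ?thesis using assms(2) by simp
qed

lemma distr_equivariant_invariant:
  assumes "sets M = sets borel" "distr M borel L = M"
    and "g \<in> borel_measurable borel" "T \<in> borel_measurable borel" "L \<in> borel_measurable borel"
    and "\<And>Q. T (g Q) = g (L Q)"
  shows "distr (distr M borel g) borel T = distr M borel g"
proof -
  have gM: "g \<in> M \<rightarrow>\<^sub>M borel" and LM: "L \<in> M \<rightarrow>\<^sub>M borel"
    using assms(3,5) measurable_cong_sets[OF assms(1) refl] by blast+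
  have "distr (distr M borel g) borel T = distr M borel (T \<circ> g)"
    by (rule distr_distr[OF assms(4) gM])
  also have "T \<circ> g = g \<circ> L" using assms(6) by auto
  also have "distr M borel (g \<circ> L) = distr (distr M borel L) borel g"
    by (rule distr_distr[OF assms(3) LM, symmetric])
  finally show ?thesis unfolding assms(2) .
qed

lemma Fubini_integral_bounded:
  fixes h :: "'a \<Rightarrow> 'b \<Rightarrow> real"
  assumes "prob_space M" "prob_space N"
    and h: "(\<lambda>z. h (fst z) (snd z)) \<in> borel_measurable (M \<Otimes>\<^sub>M N)"
    and bound: "AE x in M. AE y in N. norm (h x y) \<le> K"
  shows "(\<integral>y. (\<integral>x. h x y \<partial>M) \<partial>N) = (\<integral>x. (\<integral>y. h x y \<partial>N) \<partial>M)"
proof -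
  interpret pair_sigma_finite M N
    using assms(1,2) by (simp add: pair_sigma_finite_def prob_space_imp_sigma_finite)
  have "AE z in M \<Otimes>\<^sub>M N. norm (h (fst z) (snd z)) \<le> K"
  proof (rule AE_pair_measure)
    show "{z \<in> space (M \<Otimes>\<^sub>M N). norm (h (fst z) (snd z)) \<le> K} \<in> sets (M \<Otimes>\<^sub>M N)"
      using h by measurable
  qed (use bound in simp)
  then have "integrable (M \<Otimes>\<^sub>M N) (\<lambda>(x, y). h x y)"
    using h prob_space.finite_measure[OF prob_space_pair[OF assms(1,2)]]
    by (intro finite_measure.integrable_const_bound) (auto simp: split_beta')
  then show ?thesis by (rule Fubini_integral)
qed

section \<open>Quartic moments of orthogonally invariant unit vectors\<close>

lemma orthogonal_matrix_iff_columns: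
  "orthogonal_matrix (Q::real^'n::finite^'n) \<longleftrightarrow>
     (\<forall>j k. (\<Sum>i\<in>UNIV. Q $ i $ j * Q $ i $ k) = of_bool (j = k))"
  by (simp add: orthogonal_matrix vec_eq_iff matrix_matrix_mult_def transpose_def mat_def)

definition coord_reflection :: "'n::finite \<Rightarrow> real^'n^'n" where
  "coord_reflection k = (\<chi> i j. if i = j then (if i = k then -1 else 1) else 0)"

lemma orthogonal_coord_reflection:
  fixes k :: "'n::finite"
  shows "orthogonal_matrix (coord_reflection k)"
  unfolding orthogonal_matrix_iff_columns
proof (intro allI)
  fix j l :: 'n
  have "(\<Sum>i\<in>UNIV. coord_reflection k $ i $ j * coord_reflection k $ i $ l)
      = (\<Sum>i\<in>UNIV. if i = j then of_bool (j = l) else 0)"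
    by (rule sum.cong) (auto simp: coord_reflection_def)
  then show "(\<Sum>i\<in>UNIV. coord_reflection k $ i $ j * coord_reflection k $ i $ l) = of_bool (j = l)" by simp
qed

lemma cmat_coord_reflection_vec:
  "cmat (coord_reflection k) *v x = (\<chi> i. if i = k then - x $ i else x $ i)"
proof -
  have "(\<Sum>j\<in>UNIV. complex_of_real (coord_reflection k $ i $ j) * x $ j)
      = (\<Sum>j\<in>UNIV. if j = i then (if i = k then - x $ i else x $ i) else 0)" for i
    by (rule sum.cong) (auto simp: coord_reflection_def)
  then show ?thesis by (simp add: vec_eq_iff cmat_vec_nth)
qed

definition perm_matrix :: "('n::finite \<Rightarrow> 'n) \<Rightarrow> real^'n^'n" where
  "perm_matrix \<pi> = (\<chi> i j. of_bool (j = \<pi> i))"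

lemma cmat_perm_matrix_vec: "cmat (perm_matrix \<pi>) *v x = (\<chi> i. x $ \<pi> i)"
proof -
  have "(\<Sum>j\<in>UNIV. complex_of_real (perm_matrix \<pi> $ i $ j) * x $ j)
      = (\<Sum>j\<in>UNIV. if j = \<pi> i then x $ j else 0)" for i
    by (rule sum.cong) (auto simp: perm_matrix_def)
  then show ?thesis by (simp add: vec_eq_iff cmat_vec_nth)
qed

lemma orthogonal_perm_matrix:
  fixes \<pi> :: "'n::finite \<Rightarrow> 'n"
  assumes "bij \<pi>"
  shows "orthogonal_matrix (perm_matrix \<pi>)"
  unfolding orthogonal_matrix_iff_columns
proof (intro allI)
  fix j k :: 'n
  have "(\<Sum>i\<in>UNIV. perm_matrix \<pi> $ i $ j * perm_matrix \<pi> $ i $ k) = (\<Sum>i\<in>UNIV. of_bool (\<pi> i = j \<and> j = k))"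
    by (rule sum.cong) (auto simp: perm_matrix_def)
  also have "\<dots> = of_bool (j = k)"
  proof -
    have "{i. \<pi> i = j} = {inv \<pi> j}" using bij_inv_eq_iff[OF assms] by auto
    then show ?thesis by (cases "j = k") auto
  qed
  finally show "(\<Sum>i\<in>UNIV. perm_matrix \<pi> $ i $ j * perm_matrix \<pi> $ i $ k) = of_bool (j = k)" .
qed

definition rotation45 :: "'n::finite \<Rightarrow> 'n \<Rightarrow> real^'n^'n" where
  "rotation45 p q = (\<chi> i j. if i = p then (if j = p \<or> j = q then 1 / sqrt 2 else 0)
      else if i = q then (if j = p then - (1 / sqrt 2) else if j = q then 1 / sqrt 2 else 0)
      else of_bool (i = j))"

lemma sum_UNIV_split_pair:
  assumes "p \<noteq> q"
  shows "(\<Sum>i\<in>(UNIV::'n::finite set). f i) = f p + f q + (\<Sum>i\<in>UNIV - {p, q}. f i)"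
proof -
  have "(\<Sum>i\<in>UNIV. f i) = (\<Sum>i\<in>UNIV - {p, q}. f i) + (\<Sum>i\<in>{p, q}. f i)"
    by (rule sum.subset_diff) auto
  then show ?thesis using assms by (simp add: algebra_simps)
qed

lemma orthogonal_rotation45:
  assumes "p \<noteq> q"
  shows "orthogonal_matrix (rotation45 p q)"
  unfolding orthogonal_matrix_iff_columns
proof (intro allI)
  fix j k
  let ?f = "\<lambda>i. rotation45 p q $ i $ j * rotation45 p q $ i $ k"
  have "(\<Sum>i\<in>UNIV - {p, q}. ?f i) = (\<Sum>i\<in>UNIV - {p, q}. if i = j then of_bool (j = k) else 0)"
    by (rule sum.cong) (auto simp: rotation45_def)
  also have "\<dots> = of_bool (j = k \<and> j \<noteq> p \<and> j \<noteq> q)" by simp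
  finally have rest: "(\<Sum>i\<in>UNIV - {p, q}. ?f i) = of_bool (j = k \<and> j \<noteq> p \<and> j \<noteq> q)" .
  have half: "1 / sqrt 2 * (1 / sqrt 2) = (1 / 2 :: real)" by (simp add: divide_simps)
  show "(\<Sum>i\<in>UNIV. ?f i) = of_bool (j = k)"
    unfolding sum_UNIV_split_pair[OF assms, of ?f] rest
    using assms half by (auto simp: rotation45_def)
qed

lemma cmat_rotation45_vec_nth:
  assumes "p \<noteq> q"
  shows "(cmat (rotation45 p q) *v x) $ p = complex_of_real (1 / sqrt 2) * (x $ p + x $ q)"
proof -
  have "(\<Sum>j\<in>UNIV - {p, q}. complex_of_real (rotation45 p q $ p $ j) * x $ j) = 0"
    by (rule sum.neutral) (simp add: rotation45_def)
  then show ?thesis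
    unfolding cmat_vec_nth sum_UNIV_split_pair[OF assms]
    by (simp add: rotation45_def distrib_left)
qed

definition quartic :: "'n \<Rightarrow> 'n \<Rightarrow> 'n \<Rightarrow> 'n \<Rightarrow> complex^'n \<Rightarrow> complex" where
  "quartic p q r s x = x $ p * cnj (x $ q) * x $ r * cnj (x $ s)"

lemma continuous_on_quartic: "continuous_on UNIV (quartic p q r s)"
  unfolding quartic_def by (intro continuous_intros)

definition conj_overlap :: "complex^'n::finite \<Rightarrow> real" where
  "conj_overlap x = (cmod (\<Sum>p\<in>UNIV. (x $ p)^2))^2"

lemma continuous_on_conj_overlap: "continuous_on UNIV conj_overlap"
  unfolding conj_overlap_def by (intro continuous_intros)

lemma conj_overlap_orthogonal:
  "orthogonal_matrix Q \<Longrightarrow> conj_overlap (cmat Q *v x) = conj_overlap x"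
  unfolding conj_overlap_def power2_eq_square by (simp add: orthogonal_matrix_sum_mult)

lemma quartic_diag_expand:
  assumes "p \<noteq> q" "y $ p = complex_of_real c * (x $ p + x $ q)"
  shows "quartic p p p p y = complex_of_real (c^4) *
    (\<Sum>i\<in>{p, q}. \<Sum>j\<in>{p, q}. \<Sum>k\<in>{p, q}. \<Sum>l\<in>{p, q}. quartic i j k l x)"
proof -
  have "quartic p p p p y
      = complex_of_real (c^4) * ((x $ p + x $ q) * cnj (x $ p + x $ q) * (x $ p + x $ q) * cnj (x $ p + x $ q))"
    unfolding quartic_def assms(2)
    by (simp only: complex_cnj_mult complex_cnj_complex_of_real power4_eq_xxxx of_real_mult mult_ac)
  then show ?thesis using assms(1) by (simp add: quartic_def algebra_simps)
qed

lemma bij_map_pair: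
  fixes p q p' q' :: 'a
  assumes "p \<noteq> q" "p' \<noteq> q'"
  obtains \<pi> where "bij \<pi>" "\<pi> p = p'" "\<pi> q = q'"
proof -
  define q1 where "q1 = Transposition.transpose p p' q"
  have "q1 \<noteq> p'" using assms unfolding q1_def by (auto simp: Transposition.transpose_def)
  then show ?thesis
    using that[of "Transposition.transpose q1 q' \<circ> Transposition.transpose p p'"] assms
    by (auto simp: bij_comp q1_def Transposition.transpose_def)
qed

lemma solve_moment_system:
  fixes n b c t :: "'a::field"
  assumes "n * n * b + n * (b + c) = 1" "n * n * c + n * (2 * b) = t" "n * (n^2 + n - 2) \<noteq> 0"
  shows "b = (n - t) / (n * (n^2 + n - 2))" "c = ((n + 1) * t - 2) / (n * (n^2 + n - 2))"
proof -
  have "b * (n * (n^2 + n - 2)) = n * (n * n * b + n * (b + c)) - (n * n * c + n * (2 * b))"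
    "c * (n * (n^2 + n - 2)) = (n + 1) * (n * n * c + n * (2 * b)) - 2 * (n * n * b + n * (b + c))"
    by algebra+
  then show "b = (n - t) / (n * (n^2 + n - 2))" "c = ((n + 1) * t - 2) / (n * (n^2 + n - 2))"
    using assms by (simp_all add: eq_divide_eq)
qed

lemma two_distinct_elements:
  assumes "CARD('n) \<ge> 2"
  obtains p q :: "'n::finite" where "p \<noteq> q"
proof -
  have "\<not> (\<forall>p q::'n. p = q)"
  proof
    assume "\<forall>p q::'n. p = q"
    then have "(UNIV::'n set) \<subseteq> {undefined}" by auto
    then have "CARD('n) \<le> 1" using card_mono[of "{undefined::'n}"] by simp
    with assms show False by simp
  qed
  then show ?thesis using that by blast
qed

lemma sum_const_plus_delta:
  "(\<Sum>p\<in>(UNIV::'n::finite set). \<Sum>q\<in>UNIV. a + of_bool (p = q) * b)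
     = of_nat CARD('n) * of_nat CARD('n) * a + of_nat CARD('n) * (b::'a::comm_ring_1)"
  by (simp add: sum.distrib algebra_simps)

lemma power2_add_self_minus_2_pos: "(2::real) \<le> x \<Longrightarrow> 0 < x^2 + x - 2"
  using mult_mono[of 2 x 2 x] by (simp add: power2_eq_square)

definition overlap_mean :: "(complex^'n::finite) measure \<Rightarrow> real" where
  "overlap_mean nu = integral\<^sup>L nu conj_overlap"

locale orth_invariant_sphere =
  fixes nu :: "(complex^'n::finite) measure"
  assumes prob_space: "prob_space nu"
    and sets_eq_borel: "sets nu = sets borel"
    and AE_norm_eq_1: "AE x in nu. norm x = 1"
    and distr_orthogonal: "\<And>Q. orthogonal_matrix Q \<Longrightarrow> distr nu borel (\<lambda>x. cmat Q *v x) = nu"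
begin

definition moment :: "'n \<Rightarrow> 'n \<Rightarrow> 'n \<Rightarrow> 'n \<Rightarrow> complex" where
  "moment p q r s = integral\<^sup>L nu (quartic p q r s)"

lemma integrable_continuous:
  fixes f :: "complex^'n \<Rightarrow> 'b::{banach,second_countable_topology}"
  shows "continuous_on UNIV f \<Longrightarrow> integrable nu f"
  by (rule integrable_continuous_on_unit_ball[OF prob_space sets_eq_borel])
    (use AE_norm_eq_1 in \<open>auto elim: AE_mp\<close>)

lemma integral_orthogonal:
  fixes f :: "complex^'n \<Rightarrow> 'b::{banach,second_countable_topology}"
  assumes "orthogonal_matrix Q" "continuous_on UNIV f"
  shows "(\<integral>x. f (cmat Q *v x) \<partial>nu) = integral\<^sup>L nu f"
  by (rule integral_distr_invariant[OF sets_eq_borel distr_orthogonal[OF assms(1)]])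
    (auto intro: borel_measurable_continuous_onI continuous_intros assms(2))

lemma integrable_quartic: "integrable nu (quartic p q r s)"
  by (rule integrable_continuous[OF continuous_on_quartic])

lemma moment_perm:
  assumes "bij \<pi>"
  shows "moment (\<pi> p) (\<pi> q) (\<pi> r) (\<pi> s) = moment p q r s"
proof -
  have "(\<lambda>x. quartic p q r s (cmat (perm_matrix \<pi>) *v x)) = quartic (\<pi> p) (\<pi> q) (\<pi> r) (\<pi> s)"
    by (simp add: fun_eq_iff cmat_perm_matrix_vec quartic_def)
  then show ?thesis
    using integral_orthogonal[OF orthogonal_perm_matrix[OF assms] continuous_on_quartic, of p q r s]
    by (simp add: moment_def)
qed

lemma moment_swap: "moment p q r s = moment r q p s"
  unfolding moment_def quartic_def by (simp add: mult_ac)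

lemma moment_unpaired:
  assumes "\<not> (p = q \<and> r = s)" "\<not> (p = s \<and> q = r)" "\<not> (p = r \<and> q = s)"
  shows "moment p q r s = 0"
proof -
  define sg where "sg k i = (if i = k then -1 else 1 :: real)" for k i :: 'n
  have "\<exists>k\<in>{p, q, r, s}. sg k p * sg k q * sg k r * sg k s = -1"
    using assms by (auto simp: sg_def)
  then obtain k where k: "sg k p * sg k q * sg k r * sg k s = -1" by blast
  have "quartic p q r s (cmat (coord_reflection k) *v x)
      = complex_of_real (sg k p * sg k q * sg k r * sg k s) * quartic p q r s x" for x
    by (simp add: cmat_coord_reflection_vec quartic_def sg_def)
  then have "moment p q r s = (\<integral>x. - quartic p q r s x \<partial>nu)"
    using integral_orthogonal[OF orthogonal_coord_reflection[of k] continuous_on_quartic[of p q r s]]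
    by (simp add: k moment_def)
  then show ?thesis by (simp add: moment_def)
qed

lemma moment_rotation:
  assumes "p \<noteq> q"
  shows "moment p p p p = 2 * moment p p q q + moment p q p q"
proof -
  have c4: "(1 / sqrt 2 :: real)^4 = 1 / 4"
    by (simp add: power_one_over power_mult[of "sqrt 2" 2 2, simplified])
  have "moment p p p p = (\<integral>x. quartic p p p p (cmat (rotation45 p q) *v x) \<partial>nu)"
    unfolding moment_def
    by (rule integral_orthogonal[OF orthogonal_rotation45[OF assms] continuous_on_quartic, symmetric])
  also have "\<dots> = 1 / 4 * (\<Sum>i\<in>{p, q}. \<Sum>j\<in>{p, q}. \<Sum>k\<in>{p, q}. \<Sum>l\<in>{p, q}. moment i j k l)"
    unfolding quartic_diag_expand[OF assms cmat_rotation45_vec_nth[OF assms]] c4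
    by (simp add: moment_def integrable_sum integrable_quartic)
  also have "\<dots> = 1 / 4 * (2 * moment p p p p + 4 * moment p p q q + 2 * moment p q p q)"
    using assms moment_perm[OF bij_transpose, of p q p p p p] moment_perm[OF bij_transpose, of p q p p q q]
      moment_perm[OF bij_transpose, of p q p q p q] moment_perm[OF bij_transpose, of p q q q p p]
      moment_swap[of p q q p] moment_swap[of q p p q]
    by (simp add: moment_unpaired)
  finally have "2 * moment p p p p = 2 * (2 * moment p p q q + moment p q p q)"
    by (simp add: field_simps)
  then show ?thesis by (metis mult_left_cancel zero_neq_numeral)
qed

context
  fixes p0 q0 :: 'n
  assumes distinct: "p0 \<noteq> q0"
begin

lemma moment_pair_classes:
  assumes "p \<noteq> q"
  shows "moment p p q q = moment p0 p0 q0 q0" "moment p q p q = moment p0 q0 p0 q0"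
proof -
  obtain \<pi> where "bij \<pi>" "\<pi> p0 = p" "\<pi> q0 = q"
    using bij_map_pair[OF distinct assms] by blast
  then show "moment p p q q = moment p0 p0 q0 q0" "moment p q p q = moment p0 q0 p0 q0"
    using moment_perm[of \<pi> p0 p0 q0 q0] moment_perm[of \<pi> p0 q0 p0 q0] by simp_all
qed

lemma moment_diag: "moment p p p p = 2 * moment p0 p0 q0 q0 + moment p0 q0 p0 q0"
  using moment_perm[OF bij_transpose, of p0 p p0 p0 p0 p0] moment_rotation[OF distinct] by simp

lemma moment_decomp:
  "moment p q r s = moment p0 p0 q0 q0 * (of_bool (p = q \<and> r = s) + of_bool (p = s \<and> q = r))
     + moment p0 q0 p0 q0 * of_bool (p = r \<and> q = s)"
  using moment_unpaired[of p q r s] moment_swap[of p q q p]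
  by (cases "p = q"; cases "r = s"; cases "p = s"; cases "q = r"; cases "p = r"; cases "q = s")
    (auto simp: moment_diag moment_pair_classes)

end

lemma sum_moment_norm: "(\<Sum>p\<in>UNIV. \<Sum>q\<in>UNIV. moment p p q q) = 1"
proof -
  have unit: "(\<Sum>p\<in>UNIV. \<Sum>q\<in>UNIV. quartic p p q q x) = 1" if "norm x = 1" for x
  proof -
    have "(\<Sum>p\<in>UNIV. \<Sum>q\<in>UNIV. quartic p p q q x) = complex_of_real ((norm x)^2) * complex_of_real ((norm x)^2)"
      unfolding of_real_norm_sq_vec sum_product by (simp add: quartic_def mult_ac)
    then show ?thesis using that by simp
  qed
  have "(\<Sum>p\<in>UNIV. \<Sum>q\<in>UNIV. moment p p q q) = (\<integral>x. (\<Sum>p\<in>UNIV. \<Sum>q\<in>UNIV. quartic p p q q x) \<partial>nu)"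
    by (simp add: moment_def integrable_sum integrable_quartic)
  also have "\<dots> = (\<integral>x. 1 \<partial>nu)"
  proof (rule integral_cong_AE)
    show "(\<lambda>x. \<Sum>p\<in>UNIV. \<Sum>q\<in>UNIV. quartic p p q q x) \<in> borel_measurable nu"
      unfolding measurable_cong_sets[OF sets_eq_borel refl]
      by (intro borel_measurable_continuous_onI continuous_on_sum continuous_on_quartic)
  qed (use AE_norm_eq_1 in \<open>auto elim: AE_mp simp: unit\<close>)
  also have "\<dots> = 1" using prob_space.prob_space[OF prob_space] by simp
  finally show ?thesis .
qed

lemma sum_moment_overlap: "(\<Sum>p\<in>UNIV. \<Sum>q\<in>UNIV. moment p q p q) = complex_of_real (overlap_mean nu)"
proof -
  have pointwise: "(\<Sum>p\<in>UNIV. \<Sum>q\<in>UNIV. quartic p q p q x) = complex_of_real (conj_overlap x)" for x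
    unfolding conj_overlap_def complex_norm_square cnj_sum sum_product
    by (simp add: quartic_def power2_eq_square mult_ac)
  have "(\<Sum>p\<in>UNIV. \<Sum>q\<in>UNIV. moment p q p q) = (\<integral>x. (\<Sum>p\<in>UNIV. \<Sum>q\<in>UNIV. quartic p q p q x) \<partial>nu)"
    by (simp add: moment_def integrable_sum integrable_quartic)
  also have "\<dots> = complex_of_real (overlap_mean nu)"
    unfolding pointwise overlap_mean_def by (rule integral_complex_of_real)
  finally show ?thesis .
qed

lemma moment_eq:
  assumes "CARD('n) \<ge> 2"
  shows "moment p q r s =
    complex_of_real ((CARD('n) - overlap_mean nu) / (CARD('n) * ((real CARD('n))^2 + CARD('n) - 2)))
      * (of_bool (p = q \<and> r = s) + of_bool (p = s \<and> q = r))
    + complex_of_real (((CARD('n) + 1) * overlap_mean nu - 2) / (CARD('n) * ((real CARD('n))^2 + CARD('n) - 2)))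
      * of_bool (p = r \<and> q = s)"
proof -
  obtain p0 q0 :: 'n where pq: "p0 \<noteq> q0" using two_distinct_elements[OF assms] by blast
  define n where "n = real CARD('n)"
  define b where "b = moment p0 p0 q0 q0"
  define c where "c = moment p0 q0 p0 q0"
  have n: "complex_of_real n = of_nat CARD('n)" by (simp add: n_def)
  have "moment p p q q = b + of_bool (p = q) * (b + c)" "moment p q p q = c + of_bool (p = q) * (2 * b)" for p q
    using moment_decomp[OF pq, of p p q q] moment_decomp[OF pq, of p q p q]
    unfolding b_def c_def by (auto simp: algebra_simps)
  then have e: "of_real n * of_real n * b + of_real n * (b + c) = 1"
    "of_real n * of_real n * c + of_real n * (2 * b) = complex_of_real (overlap_mean nu)"
    using sum_moment_norm sum_moment_overlap by (simp_all only: sum_const_plus_delta n)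
  have nz: "(of_real n :: complex) * ((of_real n)^2 + of_real n - 2) \<noteq> 0"
  proof -
    have "0 < n * (n^2 + n - 2)" using assms power2_add_self_minus_2_pos[of n] by (simp add: n_def)
    then have "complex_of_real (n * (n^2 + n - 2)) \<noteq> 0" by (simp only: of_real_eq_0_iff)
    then show ?thesis by (simp only: of_real_mult of_real_add of_real_diff of_real_power of_real_numeral not_False_eq_True)
  qed
  have "b = (of_real n - of_real (overlap_mean nu)) / (of_real n * ((of_real n)^2 + of_real n - 2))"
    "c = ((of_real n + 1) * of_real (overlap_mean nu) - 2) / (of_real n * ((of_real n)^2 + of_real n - 2))"
    using solve_moment_system[OF e nz] by simp_all
  then have "b = complex_of_real ((n - overlap_mean nu) / (n * (n^2 + n - 2)))"
    "c = complex_of_real (((n + 1) * overlap_mean nu - 2) / (n * (n^2 + n - 2)))"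
    by simp_all
  moreover have "moment p q r s = b * (of_bool (p = q \<and> r = s) + of_bool (p = s \<and> q = r)) + c * of_bool (p = r \<and> q = s)"
    unfolding b_def c_def by (rule moment_decomp[OF pq])
  ultimately show ?thesis unfolding n_def by simp
qed

end

definition diag_mat :: "('n::finite \<Rightarrow> complex) \<Rightarrow> complex^'n^'n" where
  "diag_mat f = (\<chi> i j. if i = j then f i else 0)"

lemma diag_mat_vec: "diag_mat f *v x = (\<chi> i. f i * x $ i)"
proof -
  have "(\<Sum>j\<in>UNIV. diag_mat f $ i $ j * x $ j) = (\<Sum>j\<in>UNIV. if j = i then f i * x $ i else 0)" for i
    by (rule sum.cong) (auto simp: diag_mat_def)
  then show ?thesis by (simp add: vec_eq_iff matrix_vector_mult_def)
qed

lemma unitary_diag_mat: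
  fixes f :: "'n::finite \<Rightarrow> complex"
  assumes "\<And>i. cnj (f i) * f i = 1"
  shows "unitary_mat (diag_mat f)"
proof -
  have f: "f i * cnj (f i) = 1" for i using assms[of i] by (simp add: mult.commute)
  have "(\<Sum>k\<in>UNIV. diag_mat f $ i $ k * cadj (diag_mat f) $ k $ j) = (\<Sum>k\<in>UNIV. if k = i then of_bool (i = j) else 0)"
    "(\<Sum>k\<in>UNIV. cadj (diag_mat f) $ i $ k * diag_mat f $ k $ j) = (\<Sum>k\<in>UNIV. if k = i then of_bool (i = j) else 0)"
    for i j :: 'n
    by (rule sum.cong; auto simp: diag_mat_def cadj_def assms f)+
  then show ?thesis
    by (simp add: unitary_mat_def matrix_matrix_mult_def mat_def vec_eq_iff)
qed

locale unitary_invariant_sphere =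
  fixes nu :: "(complex^'n::finite) measure"
  assumes prob_space: "prob_space nu"
    and sets_eq_borel: "sets nu = sets borel"
    and AE_norm_eq_1: "AE x in nu. norm x = 1"
    and distr_unitary: "\<And>U. unitary_mat U \<Longrightarrow> distr nu borel (\<lambda>x. U *v x) = nu"

lemma orth_invariant_sphere_if_unitary: "unitary_invariant_sphere nu \<Longrightarrow> orth_invariant_sphere nu"
  unfolding unitary_invariant_sphere_def by (auto intro: orth_invariant_sphere.intro unitary_mat_cmat)

sublocale unitary_invariant_sphere \<subseteq> orth_invariant_sphere
  by (rule orth_invariant_sphere_if_unitary) (rule unitary_invariant_sphere_axioms)

lemma (in unitary_invariant_sphere) overlap_mean_eq:
  assumes "CARD('n) \<ge> 2"
  shows "overlap_mean nu = 2 / (real CARD('n) + 1)"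
proof -
  obtain p q :: 'n where pq: "p \<noteq> q" using two_distinct_elements[OF assms] by blast
  define U where "U = diag_mat (\<lambda>i. if i = p then \<i> else 1)"
  have "unitary_mat U" unfolding U_def by (rule unitary_diag_mat) simp
  then have "moment p q p q = (\<integral>x. quartic p q p q (U *v x) \<partial>nu)"
    unfolding moment_def
    by (intro integral_distr_invariant[OF sets_eq_borel distr_unitary, symmetric]
        borel_measurable_continuous_onI continuous_intros continuous_on_quartic)
  also have "\<dots> = (\<integral>x. - quartic p q p q x \<partial>nu)"
  proof (rule Bochner_Integration.integral_cong[OF refl])
    fix x :: "complex^'n"
    have "\<i> * x $ p * cnj (x $ q) * (\<i> * x $ p) * cnj (x $ q) = - (x $ p * cnj (x $ q) * x $ p * cnj (x $ q))"
      by (simp add: mult_ac)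
    then show "quartic p q p q (U *v x) = - quartic p q p q x"
      using pq by (simp add: U_def diag_mat_vec quartic_def)
  qed
  finally have "moment p q p q = 0" by (simp add: moment_def)
  moreover have "moment p q p q = complex_of_real
      (((real CARD('n) + 1) * overlap_mean nu - 2) / (CARD('n) * ((real CARD('n))^2 + CARD('n) - 2)))"
    using moment_eq[OF assms, of p q p q] pq by simp
  ultimately have "((real CARD('n) + 1) * overlap_mean nu - 2) / (CARD('n) * ((real CARD('n))^2 + CARD('n) - 2)) = 0"
    by (simp only: of_real_eq_0_iff)
  moreover have "0 < real CARD('n) * ((real CARD('n))^2 + CARD('n) - 2)"
    using assms power2_add_self_minus_2_pos[of "real CARD('n)"] by simp
  ultimately show ?thesis by (simp add: field_simps)
qed

section \<open>Mean purity and one-tangle\<close>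

lemma merge_eq_iff:
  assumes "a \<in> PiE A (\<lambda>_. UNIV)" "a' \<in> PiE A (\<lambda>_. UNIV)"
    and "b \<in> PiE (- A) (\<lambda>_. UNIV)" "b' \<in> PiE (- A) (\<lambda>_. UNIV)"
  shows "merge A a b = merge A a' b' \<longleftrightarrow> a = a' \<and> b = b'"
proof
  assume eq: "merge A a b = merge A a' b'"
  show "a = a' \<and> b = b'"
  proof (intro conjI ext)
    fix i
    show "a i = a' i" "b i = b' i"
      using fun_cong[OF eq, of i] assms by (cases "i \<in> A"; auto simp: merge_def PiE_def extensional_def)+
  qed
qed simp

lemma purity_eq_sum_quartic:
  "purity A x = (\<Sum>a\<in>PiE A (\<lambda>_. UNIV). \<Sum>a'\<in>PiE A (\<lambda>_. UNIV).
     \<Sum>b\<in>PiE (- A) (\<lambda>_. UNIV). \<Sum>b'\<in>PiE (- A) (\<lambda>_. UNIV).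
     quartic (merge A a b) (merge A a' b) (merge A a' b') (merge A a b') x)"
  unfolding purity_def sum_product by (simp add: quartic_def mult_ac)

lemma sum_pairing_indicators:
  fixes B C :: "'c::comm_ring_1"
  assumes "finite X" "finite Y"
  shows "(\<Sum>a\<in>X. \<Sum>a'\<in>X. \<Sum>b\<in>Y. \<Sum>b'\<in>Y.
      B * (of_bool (a = a') + of_bool (b = b')) + C * of_bool (a = a' \<and> b = b'))
    = B * (of_nat (card X) * of_nat (card Y)^2 + of_nat (card X)^2 * of_nat (card Y))
      + C * of_nat (card X) * of_nat (card Y)"
proof -
  have X: "(\<Sum>a'\<in>X. of_bool (a = a') * c) = c" if "a \<in> X" for a and c :: 'c
    using assms that by simp
  have Y: "(\<Sum>b'\<in>Y. of_bool (b = b') * c) = c" if "b \<in> Y" for b and c :: 'c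
    using assms that by simp
  have "(\<Sum>a\<in>X. \<Sum>a'\<in>X. \<Sum>b\<in>Y. \<Sum>b'\<in>Y.
      B * (of_bool (a = a') + of_bool (b = b')) + C * of_bool (a = a' \<and> b = b'))
    = (\<Sum>a\<in>X. \<Sum>a'\<in>X. \<Sum>b\<in>Y. \<Sum>b'\<in>Y.
      of_bool (a = a') * B + of_bool (b = b') * (B + of_bool (a = a') * C))"
    by (simp add: of_bool_conj algebra_simps)
  also have "\<dots> = (\<Sum>a\<in>X. \<Sum>a'\<in>X. of_nat (card Y) * (of_nat (card Y) * (of_bool (a = a') * B)
      + (B + of_bool (a = a') * C)))"
    using assms by (simp add: sum.distrib Y)
  also have "\<dots> = (\<Sum>a\<in>X. of_nat (card Y) * (of_nat (card Y) * B + of_nat (card X) * B + C))"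
    using assms by (simp add: sum.distrib sum_distrib_left[symmetric] X algebra_simps)
  also have "\<dots> = B * (of_nat (card X) * of_nat (card Y)^2 + of_nat (card X)^2 * of_nat (card Y))
      + C * of_nat (card X) * of_nat (card Y)"
    by (simp add: algebra_simps power2_eq_square)
  finally show ?thesis .
qed

lemma card_pow_ge_2:
  assumes "CARD('d::finite) \<ge> 2"
  shows "CARD('d) ^ CARD('i::finite) \<ge> 2"
proof -
  have "CARD('d) ^ 1 \<le> CARD('d) ^ CARD('i)"
    using assms by (intro power_increasing) (auto simp: Suc_le_eq)
  then show ?thesis using assms by simp
qed

lemma real_card_pow_ge_2:
  assumes "CARD('d::finite) \<ge> 2"
  shows "real CARD('d) ^ CARD('i::finite) \<ge> 2"
  using card_pow_ge_2[OF assms, where 'i='i] by (metis of_nat_le_iff of_nat_numeral of_nat_power)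

lemma integral_purity:
  fixes nu :: "(complex^('i::finite \<Rightarrow> 'd::finite)) measure" and A :: "'i set"
  assumes nu: "orth_invariant_sphere nu" and d: "CARD('d) \<ge> 2"
  defines "D \<equiv> real CARD('d) ^ CARD('i)" and "t \<equiv> overlap_mean nu"
    and "\<alpha> \<equiv> real CARD('d) ^ card A" and "\<beta> \<equiv> real CARD('d) ^ card (- A)"
  shows "integral\<^sup>L nu (purity A) = complex_of_real (((D - t) * (\<alpha> + \<beta>) + (D + 1) * t - 2) / (D^2 + D - 2))"
proof -
  interpret orth_invariant_sphere nu by (fact nu)
  define X where "X = PiE A (\<lambda>_. UNIV :: 'd set)"
  define Y where "Y = PiE (- A) (\<lambda>_. UNIV :: 'd set)"
  define B where "B = (D - t) / (D * (D^2 + D - 2))"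
  define C where "C = ((D + 1) * t - 2) / (D * (D^2 + D - 2))"
  have fin: "finite X" "finite Y" unfolding X_def Y_def by (auto intro: finite_PiE)
  have cardXY: "real (card X) = \<alpha>" "real (card Y) = \<beta>"
    unfolding X_def Y_def \<alpha>_def \<beta>_def by (simp_all add: card_PiE)
  have D: "\<alpha> * \<beta> = D"
    using card_Un_disjoint[of A "- A"] by (simp add: D_def \<alpha>_def \<beta>_def flip: power_add)
  have card: "CARD('i \<Rightarrow> 'd) \<ge> 2" using card_pow_ge_2[OF d] by (simp add: card_fun)
  have real_card: "real CARD('i \<Rightarrow> 'd) = D" by (simp add: D_def card_fun)
  have D2: "D \<ge> 2" unfolding D_def by (rule real_card_pow_ge_2[OF d])
  have "integral\<^sup>L nu (purity A) = (\<Sum>a\<in>X. \<Sum>a'\<in>X. \<Sum>b\<in>Y. \<Sum>b'\<in>Y.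
      moment (merge A a b) (merge A a' b) (merge A a' b') (merge A a b'))"
    unfolding purity_eq_sum_quartic X_def Y_def by (simp add: moment_def integrable_sum integrable_quartic)
  also have "\<dots> = (\<Sum>a\<in>X. \<Sum>a'\<in>X. \<Sum>b\<in>Y. \<Sum>b'\<in>Y.
      of_real B * (of_bool (a = a') + of_bool (b = b')) + of_real C * of_bool (a = a' \<and> b = b'))"
    unfolding moment_eq[OF card] B_def C_def real_card t_def
    by (intro sum.cong refl) (auto simp: X_def Y_def merge_eq_iff real_card simp del: of_real_divide)
  also have "\<dots> = complex_of_real (B * (\<alpha> * \<beta>^2 + \<alpha>^2 * \<beta>) + C * (\<alpha> * \<beta>))"
    unfolding sum_pairing_indicators[OF fin] by (simp flip: cardXY)
  also have "B * (\<alpha> * \<beta>^2 + \<alpha>^2 * \<beta>) + C * (\<alpha> * \<beta>)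
      = ((D - t) * (\<alpha> + \<beta>) + (D + 1) * t - 2) / (D^2 + D - 2)"
  proof -
    have cancel: "x / (D * E) * (D * s) + y / (D * E) * D = (x * s + y) / E" if "E \<noteq> 0" for x y s E
      using that D2 by (simp add: field_simps)
    have nz: "D^2 + D - 2 \<noteq> 0" using D2 power2_add_self_minus_2_pos[of D] by auto
    have "B * (\<alpha> * \<beta>^2 + \<alpha>^2 * \<beta>) + C * (\<alpha> * \<beta>) = B * (D * (\<alpha> + \<beta>)) + C * D"
      using D by (simp add: power2_eq_square algebra_simps)
    also have "\<dots> = ((D - t) * (\<alpha> + \<beta>) + ((D + 1) * t - 2)) / (D^2 + D - 2)"
      unfolding B_def C_def by (rule cancel[OF nz])
    finally show ?thesis by (simp add: add_diff_eq)
  qed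
  finally show ?thesis .
qed

lemma continuous_on_purity: "continuous_on UNIV (purity A)"
  unfolding purity_def by (intro continuous_intros)

lemma continuous_on_tau_bip: "continuous_on UNIV (tau_bip A)"
  unfolding tau_bip_def purity_def by (intro continuous_intros)

lemma one_tangle_eq_sum_mult:
  "one_tangle = (\<lambda>\<psi>::complex^('i::finite \<Rightarrow> 'd::finite).
     (\<Sum>A\<in>{A. A \<noteq> {} \<and> A \<noteq> UNIV}. tau_bip A \<psi>) * (1 / 2 / (2 ^ (CARD('i) - 1) - 1)))"
  by (simp add: fun_eq_iff one_tangle_def)

lemma continuous_on_one_tangle: "continuous_on UNIV one_tangle"
  unfolding one_tangle_eq_sum_mult by (intro continuous_intros continuous_on_tau_bip)

lemma integral_tau_bip:
  fixes nu :: "(complex^('i::finite \<Rightarrow> 'd::finite)) measure" and A :: "'i set"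
  assumes nu: "orth_invariant_sphere nu" and d: "CARD('d) \<ge> 2"
  defines "D \<equiv> real CARD('d) ^ CARD('i)" and "t \<equiv> overlap_mean nu"
  shows "integral\<^sup>L nu (tau_bip A) =
    2 * (D - t) * (D + 1 - real CARD('d) ^ card A - real CARD('d) ^ card (- A)) / (D^2 + D - 2)"
proof -
  interpret orth_invariant_sphere nu by (fact nu)
  have nz: "D^2 + D - 2 \<noteq> 0"
    using power2_add_self_minus_2_pos[OF real_card_pow_ge_2[OF d, where 'i='i]] unfolding D_def by simp
  have "integral\<^sup>L nu (tau_bip A) = (\<integral>x. 2 - 2 * Re (purity A x) \<partial>nu)"
    unfolding tau_bip_def by (simp add: algebra_simps)
  also have "\<dots> = 2 - 2 * Re (integral\<^sup>L nu (purity A))"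
    using integrable_continuous[OF continuous_on_purity] prob_space.prob_space[OF prob_space]
    by (simp add: integral_Re prob_space.finite_measure[OF prob_space] finite_measure.integrable_const)
  also have "\<dots> = 2 * (D - t) * (D + 1 - real CARD('d) ^ card A - real CARD('d) ^ card (- A)) / (D^2 + D - 2)"
    unfolding integral_purity[OF nu d] D_def[symmetric] t_def[symmetric] using nz
    by (simp add: field_simps power2_eq_square)
  finally show ?thesis .
qed

lemma sum_Pow_power_card:
  fixes x :: "'a::comm_semiring_1"
  assumes "finite I"
  shows "(\<Sum>A\<in>Pow I. x ^ card A) = (x + 1) ^ card I"
  using prod_add[OF assms, of "\<lambda>_. x" "\<lambda>_. 1"] by simp

lemma sum_proper_subsets_weight:
  fixes d :: real
  shows "(\<Sum>A\<in>{A. A \<noteq> {} \<and> A \<noteq> (UNIV::'i::finite set)}. d ^ CARD('i) + 1 - d ^ card A - d ^ card (- A))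
    = 2 ^ CARD('i) * (d ^ CARD('i) + 1) - 2 * (d + 1) ^ CARD('i)"
proof -
  have compl: "(\<Sum>A\<in>Pow (UNIV::'i set). d ^ card (- A)) = (\<Sum>A\<in>Pow (UNIV::'i set). d ^ card A)"
    by (rule sum.reindex_bij_witness[of _ uminus uminus]) auto
  have "(\<Sum>A\<in>{A. A \<noteq> {} \<and> A \<noteq> (UNIV::'i set)}. d ^ CARD('i) + 1 - d ^ card A - d ^ card (- A))
      = (\<Sum>A\<in>Pow (UNIV::'i set). d ^ CARD('i) + 1 - d ^ card A - d ^ card (- A))"
    by (rule sum.mono_neutral_left) auto
  also have "\<dots> = 2 ^ CARD('i) * (d ^ CARD('i) + 1) - 2 * (d + 1) ^ CARD('i)"
    unfolding sum_subtractf compl sum_Pow_power_card[OF finite_class.finite_UNIV] by (simp add: card_Pow)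
  finally show ?thesis .
qed

definition tangle_coeff :: "nat \<Rightarrow> real \<Rightarrow> real" where
  "tangle_coeff N d = (2 ^ N * (d ^ N + 1) - 2 * (d + 1) ^ N) / ((2 ^ (N - 1) - 1) * ((d ^ N)^2 + d ^ N - 2))"

lemma integral_one_tangle:
  fixes nu :: "(complex^('i::finite \<Rightarrow> 'd::finite)) measure"
  assumes nu: "orth_invariant_sphere nu" and d: "CARD('d) \<ge> 2"
  shows "integral\<^sup>L nu one_tangle =
    (real CARD('d) ^ CARD('i) - overlap_mean nu) * tangle_coeff CARD('i) (real CARD('d))"
proof -
  interpret orth_invariant_sphere nu by (fact nu)
  define P where "P = {A. A \<noteq> {} \<and> A \<noteq> (UNIV::'i set)}"
  define D where "D = real CARD('d) ^ CARD('i)"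
  define K where "K = (2::real) ^ (CARD('i) - 1) - 1"
  have two_not_zero: "(2::real) \<noteq> 0" by simp
  have "integral\<^sup>L nu one_tangle = ((\<Sum>A\<in>P. integral\<^sup>L nu (tau_bip A)) / 2) / K"
    unfolding one_tangle_def[abs_def] P_def K_def
    by (simp add: integrable_continuous continuous_on_tau_bip)
  also have "(\<Sum>A\<in>P. integral\<^sup>L nu (tau_bip A)) = 2 * ((D - overlap_mean nu) *
      ((\<Sum>A\<in>P. D + 1 - real CARD('d) ^ card A - real CARD('d) ^ card (- A)) / (D^2 + D - 2)))"
    unfolding integral_tau_bip[OF nu d] D_def[symmetric]
    by (simp only: sum_divide_distrib sum_distrib_left mult.assoc times_divide_eq_right)
  also have "((2 * ((D - overlap_mean nu) *
      ((\<Sum>A\<in>P. D + 1 - real CARD('d) ^ card A - real CARD('d) ^ card (- A)) / (D^2 + D - 2)))) / 2) / K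
    = (D - overlap_mean nu) * tangle_coeff CARD('i) (real CARD('d))"
    unfolding P_def sum_proper_subsets_weight tangle_coeff_def D_def K_def nonzero_mult_div_cancel_left[OF two_not_zero]
    by (simp add: divide_divide_eq_left mult.commute)
  finally show ?thesis unfolding D_def .
qed

section \<open>Haar-random gates and product inputs\<close>

lemma sum_UNIV_fun_prod:
  fixes f :: "'i::finite \<Rightarrow> 'd::finite \<Rightarrow> 'c::comm_semiring_1"
  shows "(\<Sum>x\<in>UNIV. \<Prod>i\<in>UNIV. f i (x i)) = (\<Prod>i\<in>UNIV. \<Sum>j\<in>UNIV. f i j)"
  using prod_sum_PiE[of "UNIV::'i set" "\<lambda>_. UNIV::'d set" f] by (simp add: PiE_UNIV_domain)

lemma norm_prod_state: "norm (prod_state \<phi>) = (\<Prod>i\<in>UNIV. norm (\<phi> i))"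
proof -
  have sq: "(norm x)^2 = (\<Sum>j\<in>UNIV. (cmod (x $ j))^2)" for x :: "complex^'n::finite"
    by (simp add: norm_vec_def L2_set_def sum_nonneg)
  have "(norm (prod_state \<phi>))^2 = (\<Sum>x\<in>UNIV. \<Prod>i\<in>UNIV. (cmod (\<phi> i $ x i))^2)"
    unfolding sq by (simp add: prod_state_def prod_norm[symmetric] prod_power_distrib)
  also have "\<dots> = (\<Prod>i\<in>UNIV. (norm (\<phi> i))^2)"
    unfolding sq by (rule sum_UNIV_fun_prod)
  also have "\<dots> = (\<Prod>i\<in>UNIV. norm (\<phi> i))^2" by (simp add: prod_power_distrib)
  finally show ?thesis by (simp add: power2_eq_iff_nonneg prod_nonneg)
qed

lemma conj_overlap_prod_state: "conj_overlap (prod_state \<phi>) = (\<Prod>i\<in>UNIV. conj_overlap (\<phi> i))"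
proof -
  have "(\<Sum>x\<in>UNIV. (prod_state \<phi> $ x)^2) = (\<Prod>i\<in>UNIV. \<Sum>j\<in>UNIV. (\<phi> i $ j)^2)"
    unfolding sum_UNIV_fun_prod[symmetric] by (simp add: prod_state_def prod_power_distrib)
  then show ?thesis unfolding conj_overlap_def by (simp add: prod_norm[symmetric] prod_power_distrib)
qed

lemma measurable_prod_state:
  fixes S :: "(complex^'d::finite) measure"
  assumes "sets S = sets borel"
  shows "(prod_state :: ('i::finite \<Rightarrow> complex^'d) \<Rightarrow> _) \<in> borel_measurable (PiM UNIV (\<lambda>_. S))"
proof -
  have "continuous_on UNIV (prod_state :: ('i \<Rightarrow> complex^'d) \<Rightarrow> _)"
    unfolding prod_state_def[abs_def]
    by (intro continuous_intros continuous_on_compose2[OF continuous_on_product_coordinates]) auto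
  then have "(prod_state :: ('i \<Rightarrow> complex^'d) \<Rightarrow> _) \<in> borel_measurable (PiM UNIV (\<lambda>_. borel))"
    using borel_measurable_continuous_onI measurable_cong_sets[OF sets_PiM_equal_borel refl] by blast
  moreover have "sets (PiM UNIV (\<lambda>_. S)) = sets (PiM (UNIV::'i set) (\<lambda>_. borel))"
    using assms by (intro sets_PiM_cong) auto
  ultimately show ?thesis using measurable_cong_sets by blast
qed

lemma unitary_invariant_sphere_if_unif_sphere: "is_unif_sphere S \<Longrightarrow> unitary_invariant_sphere S"
  unfolding is_unif_sphere_def by (auto intro: unitary_invariant_sphere.intro)

lemma integral_conj_overlap_prod_state:
  fixes S :: "(complex^'d::finite) measure"
  assumes S: "is_unif_sphere S" and d: "CARD('d) \<ge> 2"
  defines "P \<equiv> PiM (UNIV::'i::finite set) (\<lambda>_. S)"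
  shows "integrable P (\<lambda>\<phi>. conj_overlap (prod_state \<phi>))"
    and "(\<integral>\<phi>. conj_overlap (prod_state \<phi>) \<partial>P) = (2 / (real CARD('d) + 1)) ^ CARD('i)"
proof -
  interpret unitary_invariant_sphere S by (rule unitary_invariant_sphere_if_unif_sphere[OF S])
  interpret product_sigma_finite "\<lambda>_::'i. S"
    by (simp add: product_sigma_finite_def prob_space_imp_sigma_finite prob_space)
  have int: "integrable S conj_overlap" by (rule integrable_continuous[OF continuous_on_conj_overlap])
  show "integrable P (\<lambda>\<phi>. conj_overlap (prod_state \<phi>))"
    unfolding conj_overlap_prod_state P_def by (rule product_integrable_prod) (auto intro: int)
  have "(\<integral>\<phi>. conj_overlap (prod_state \<phi>) \<partial>P) = (\<Prod>i\<in>(UNIV::'i set). integral\<^sup>L S conj_overlap)"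
    unfolding conj_overlap_prod_state P_def by (rule product_integral_prod) (auto intro: int)
  also have "integral\<^sup>L S conj_overlap = 2 / (real CARD('d) + 1)"
    using overlap_mean_eq[OF d] unfolding overlap_mean_def .
  finally show "(\<integral>\<phi>. conj_overlap (prod_state \<phi>) \<partial>P) = (2 / (real CARD('d) + 1)) ^ CARD('i)"
    by simp
qed

lemma sets_borel_norm_eq: "{x \<in> space borel. norm (x::'a::real_normed_vector) = c} \<in> sets borel"
  by measurable

lemma prob_space_distr_unit_vector:
  fixes g :: "'m::euclidean_space \<Rightarrow> 'a::euclidean_space"
  assumes "prob_space M" "sets M = sets borel" "continuous_on UNIV g"
    and "AE Q in M. norm (g Q) = 1"
  shows "prob_space (distr M borel g)" "AE x in distr M borel g. norm x = 1"
proof -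
  have gM: "g \<in> M \<rightarrow>\<^sub>M borel"
    using borel_measurable_continuous_onI[OF assms(3)] measurable_cong_sets[OF assms(2) refl] by blast
  show "prob_space (distr M borel g)" by (rule prob_space.prob_space_distr[OF assms(1) gM])
  show "AE x in distr M borel g. norm x = 1"
    unfolding AE_distr_iff[OF gM sets_borel_norm_eq] by (rule assms(4))
qed

lemma orth_invariant_sphere_haar_orth:
  fixes MO :: "(real^'n::finite^'n) measure" and \<psi> :: "complex^'n"
  assumes haar: "is_haar_orth MO" and unit: "norm \<psi> = 1"
  shows "orth_invariant_sphere (distr MO borel (\<lambda>Q. cmat Q *v \<psi>))"
proof -
  have P: "prob_space MO" and sets: "sets MO = sets borel" and ae: "AE Q in MO. orthogonal_matrix Q"
    and inv: "\<And>V. orthogonal_matrix V \<Longrightarrow> distr MO borel (\<lambda>Q. V ** Q) = MO"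
    using haar unfolding is_haar_orth_def by auto
  have cont: "continuous_on UNIV (\<lambda>Q. cmat Q *v \<psi>)" by (intro continuous_intros)
  have AE_unit: "AE Q in MO. norm (cmat Q *v \<psi>) = 1"
    using ae by (rule AE_mp) (simp add: norm_unitary_mult unitary_mat_cmat unit)
  note distr = prob_space_distr_unit_vector[OF P sets cont AE_unit]
  show ?thesis
  proof (rule orth_invariant_sphere.intro)
    show "distr (distr MO borel (\<lambda>Q. cmat Q *v \<psi>)) borel (\<lambda>x. cmat V *v x) = distr MO borel (\<lambda>Q. cmat Q *v \<psi>)"
      if "orthogonal_matrix V" for V
      by (rule distr_equivariant_invariant[OF sets inv[OF that]])
        (auto intro!: borel_measurable_continuous_onI continuous_intros simp: matrix_vector_mul_assoc cmat_mult)
  qed (simp_all add: distr)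
qed

lemma overlap_mean_haar_orth:
  fixes MO :: "(real^'n::finite^'n) measure" and \<psi> :: "complex^'n"
  assumes haar: "is_haar_orth MO"
  shows "overlap_mean (distr MO borel (\<lambda>Q. cmat Q *v \<psi>)) = conj_overlap \<psi>"
proof -
  have P: "prob_space MO" and sets: "sets MO = sets borel" and ae: "AE Q in MO. orthogonal_matrix Q"
    using haar unfolding is_haar_orth_def by auto
  have "(\<lambda>Q. cmat Q *v \<psi>) \<in> borel_measurable borel"
    by (intro borel_measurable_continuous_onI continuous_intros)
  then have gM: "(\<lambda>Q. cmat Q *v \<psi>) \<in> MO \<rightarrow>\<^sub>M borel" using measurable_cong_sets[OF sets refl] by blast
  have "overlap_mean (distr MO borel (\<lambda>Q. cmat Q *v \<psi>)) = (\<integral>Q. conj_overlap (cmat Q *v \<psi>) \<partial>MO)"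
    unfolding overlap_mean_def
    by (rule integral_distr[OF gM borel_measurable_continuous_onI[OF continuous_on_conj_overlap]])
  also have "\<dots> = (\<integral>Q. conj_overlap \<psi> \<partial>MO)"
  proof (rule integral_cong_AE)
    show "(\<lambda>Q. conj_overlap (cmat Q *v \<psi>)) \<in> borel_measurable MO"
      using measurable_compose[OF gM borel_measurable_continuous_onI[OF continuous_on_conj_overlap]] .
    show "AE Q in MO. conj_overlap (cmat Q *v \<psi>) = conj_overlap \<psi>"
      using ae by (rule AE_mp) (simp add: conj_overlap_orthogonal)
  qed simp
  also have "\<dots> = conj_overlap \<psi>" using prob_space.prob_space[OF P] by simp
  finally show ?thesis .
qed

lemma unitary_invariant_sphere_haar_unitary:
  fixes MU :: "(complex^'n::finite^'n) measure" and \<psi> :: "complex^'n"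
  assumes haar: "is_haar_unitary MU" and unit: "norm \<psi> = 1"
  shows "unitary_invariant_sphere (distr MU borel (\<lambda>U. U *v \<psi>))"
proof -
  have P: "prob_space MU" and sets: "sets MU = sets borel" and ae: "AE U in MU. unitary_mat U"
    and inv: "\<And>V. unitary_mat V \<Longrightarrow> distr MU borel (\<lambda>U. V ** U) = MU"
    using haar unfolding is_haar_unitary_def by auto
  have cont: "continuous_on UNIV (\<lambda>U. U *v \<psi>)" by (intro continuous_intros)
  have AE_unit: "AE U in MU. norm (U *v \<psi>) = 1"
    using ae by (rule AE_mp) (simp add: norm_unitary_mult unit)
  note distr = prob_space_distr_unit_vector[OF P sets cont AE_unit]
  show ?thesis
  proof (rule unitary_invariant_sphere.intro)
    show "distr (distr MU borel (\<lambda>U. U *v \<psi>)) borel (\<lambda>x. V *v x) = distr MU borel (\<lambda>U. U *v \<psi>)"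
      if "unitary_mat V" for V
      by (rule distr_equivariant_invariant[OF sets inv[OF that]])
        (auto intro!: borel_measurable_continuous_onI continuous_intros simp: matrix_vector_mul_assoc)
  qed (simp_all add: distr)
qed

lemma integral_one_tangle_haar_orth:
  fixes MO :: "(real^('i::finite \<Rightarrow> 'd::finite)^('i \<Rightarrow> 'd)) measure"
  assumes haar: "is_haar_orth MO" and unit: "norm \<psi> = 1" and d: "CARD('d) \<ge> 2"
  shows "(\<integral>Q. one_tangle (cmat Q *v \<psi>) \<partial>MO) =
    (real CARD('d) ^ CARD('i) - conj_overlap \<psi>) * tangle_coeff CARD('i) (real CARD('d))"
proof -
  have sets: "sets MO = sets borel" using haar unfolding is_haar_orth_def by auto
  have "(\<lambda>Q. cmat Q *v \<psi>) \<in> MO \<rightarrow>\<^sub>M borel"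
    unfolding measurable_cong_sets[OF sets refl] by (intro borel_measurable_continuous_onI continuous_intros)
  then have "(\<integral>Q. one_tangle (cmat Q *v \<psi>) \<partial>MO) = integral\<^sup>L (distr MO borel (\<lambda>Q. cmat Q *v \<psi>)) one_tangle"
    by (simp add: integral_distr borel_measurable_continuous_onI[OF continuous_on_one_tangle])
  then show ?thesis
    unfolding integral_one_tangle[OF orth_invariant_sphere_haar_orth[OF haar unit] d]
      overlap_mean_haar_orth[OF haar] .
qed

lemma integral_one_tangle_haar_unitary:
  fixes MU :: "(complex^('i::finite \<Rightarrow> 'd::finite)^('i \<Rightarrow> 'd)) measure"
  assumes haar: "is_haar_unitary MU" and unit: "norm \<psi> = 1" and d: "CARD('d) \<ge> 2"
  shows "(\<integral>U. one_tangle (U *v \<psi>) \<partial>MU) =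
    (real CARD('d) ^ CARD('i) - 2 / (real CARD('d) ^ CARD('i) + 1)) * tangle_coeff CARD('i) (real CARD('d))"
proof -
  have sets: "sets MU = sets borel" using haar unfolding is_haar_unitary_def by auto
  have uis: "unitary_invariant_sphere (distr MU borel (\<lambda>U. U *v \<psi>))"
    by (rule unitary_invariant_sphere_haar_unitary[OF haar unit])
  have "(\<lambda>U. U *v \<psi>) \<in> MU \<rightarrow>\<^sub>M borel"
    unfolding measurable_cong_sets[OF sets refl] by (intro borel_measurable_continuous_onI continuous_intros)
  then have "(\<integral>U. one_tangle (U *v \<psi>) \<partial>MU) = integral\<^sup>L (distr MU borel (\<lambda>U. U *v \<psi>)) one_tangle"
    by (simp add: integral_distr borel_measurable_continuous_onI[OF continuous_on_one_tangle])
  also have "\<dots> = (real CARD('d) ^ CARD('i) - overlap_mean (distr MU borel (\<lambda>U. U *v \<psi>)))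
      * tangle_coeff CARD('i) (real CARD('d))"
    by (rule integral_one_tangle[OF orth_invariant_sphere_if_unitary[OF uis] d])
  also have "overlap_mean (distr MU borel (\<lambda>U. U *v \<psi>)) = 2 / (real CARD('d) ^ CARD('i) + 1)"
    using unitary_invariant_sphere.overlap_mean_eq[OF uis] card_pow_ge_2[OF d, where 'i='i]
    by (simp add: card_fun)
  finally show ?thesis .
qed

lemma AE_norm_prod_state:
  assumes S: "is_unif_sphere S"
  shows "AE \<phi> in PiM (UNIV::'i::finite set) (\<lambda>_. S). norm (prod_state \<phi>) = 1"
proof -
  have "prob_space S" and unit: "AE x in S. norm x = 1"
    using S unfolding is_unif_sphere_def by auto
  then have "AE \<phi> in PiM (UNIV::'i set) (\<lambda>_. S). \<forall>i\<in>UNIV. norm (\<phi> i) = 1"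
    by (intro AE_finite_allI AE_PiM_component) auto
  then show ?thesis by (rule AE_mp) (simp add: norm_prod_state)
qed

lemma Fubini_one_tangle_product_inputs:
  fixes MM :: "'m::euclidean_space measure" and S :: "(complex^'d::finite) measure"
    and G :: "'m \<Rightarrow> complex^('i::finite \<Rightarrow> 'd) \<Rightarrow> complex^('i \<Rightarrow> 'd)"
    and F :: "complex^('i \<Rightarrow> 'd) \<Rightarrow> real"
  assumes MM: "prob_space MM" "sets MM = sets borel" and S: "is_unif_sphere S"
    and G: "continuous_on UNIV (\<lambda>z. G (fst z) (snd z))"
    and isometric: "AE Q in MM. \<forall>\<psi>. norm (G Q \<psi>) = norm \<psi>"
    and inner: "\<And>\<psi>. norm \<psi> = 1 \<Longrightarrow> (\<integral>Q. one_tangle (G Q \<psi>) \<partial>MM) = F \<psi>"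
    and F: "F \<in> borel_measurable borel"
  defines "P \<equiv> PiM (UNIV::'i set) (\<lambda>_. S)"
  shows "(\<integral>Q. (\<integral>\<phi>. one_tangle (G Q (prod_state \<phi>)) \<partial>P) \<partial>MM) = (\<integral>\<phi>. F (prod_state \<phi>) \<partial>P)"
proof -
  have "prob_space S" "sets S = sets borel" using S unfolding is_unif_sphere_def by auto
  then have P: "prob_space P" and ps: "prod_state \<in> borel_measurable P"
    unfolding P_def by (auto intro: prob_space_PiM measurable_prod_state)
  have unit: "AE \<phi> in P. norm (prod_state \<phi>) = 1" unfolding P_def by (rule AE_norm_prod_state[OF S])
  obtain K where K: "\<And>\<psi>::complex^('i \<Rightarrow> 'd). norm \<psi> \<le> 1 \<Longrightarrow> norm (one_tangle \<psi>) \<le> K"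
    using continuous_on_bounded_unit_ball[OF continuous_on_one_tangle] by blast
  have "(\<lambda>z. (snd z, prod_state (fst z))) \<in> borel_measurable (P \<Otimes>\<^sub>M MM)"
    using ps MM(2) by (intro borel_measurable_Pair) (auto intro: measurable_compose[OF measurable_fst]
      simp: measurable_cong_sets[OF refl MM(2)])
  from borel_measurable_continuous_on[OF continuous_on_one_tangle borel_measurable_continuous_on[OF G this]]
  have h: "(\<lambda>z. one_tangle (G (snd z) (prod_state (fst z)))) \<in> borel_measurable (P \<Otimes>\<^sub>M MM)"
    by simp
  have bound: "AE Q in MM. norm (one_tangle (G Q (prod_state \<phi>))) \<le> K"
    if "norm (prod_state \<phi>) = 1" for \<phi> :: "'i \<Rightarrow> complex^'d"
    using isometric by (rule AE_mp) (use that K in \<open>auto intro!: AE_I2\<close>)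
  have "AE \<phi> in P. AE Q in MM. norm (one_tangle (G Q (prod_state \<phi>))) \<le> K"
    using unit by (rule AE_mp) (blast intro: AE_I2 bound)
  then have "(\<integral>Q. (\<integral>\<phi>. one_tangle (G Q (prod_state \<phi>)) \<partial>P) \<partial>MM)
      = (\<integral>\<phi>. (\<integral>Q. one_tangle (G Q (prod_state \<phi>)) \<partial>MM) \<partial>P)"
    by (rule Fubini_integral_bounded[OF P MM(1) h])
  also have "\<dots> = (\<integral>\<phi>. F (prod_state \<phi>) \<partial>P)"
  proof (rule integral_cong_AE)
    interpret sigma_finite_measure MM by (rule prob_space_imp_sigma_finite[OF MM(1)])
    show "(\<lambda>\<phi>. \<integral>Q. one_tangle (G Q (prod_state \<phi>)) \<partial>MM) \<in> borel_measurable P"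
      using h by (intro borel_measurable_lebesgue_integral) (simp add: split_beta')
    show "(\<lambda>\<phi>. F (prod_state \<phi>)) \<in> borel_measurable P"
      using measurable_compose[OF ps F] .
    show "AE \<phi> in P. (\<integral>Q. one_tangle (G Q (prod_state \<phi>)) \<partial>MM) = F (prod_state \<phi>)"
      using unit by (rule AE_mp) (simp add: inner)
  qed
  finally show ?thesis .
qed

lemma integral_ent_power_haar_orth:
  fixes S :: "(complex^'d::finite) measure" and MO :: "(real^('i::finite \<Rightarrow> 'd)^('i \<Rightarrow> 'd)) measure"
  assumes d: "CARD('d) \<ge> 2" and S: "is_unif_sphere S" and haar: "is_haar_orth MO"
  shows "(\<integral>Q. ent_power S (cmat Q) \<partial>MO) =
    (real CARD('d) ^ CARD('i) - (2 / (real CARD('d) + 1)) ^ CARD('i)) * tangle_coeff CARD('i) (real CARD('d))"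
proof -
  define D where "D = real CARD('d) ^ CARD('i)"
  define c where "c = tangle_coeff CARD('i) (real CARD('d))"
  let ?P = "PiM (UNIV::'i set) (\<lambda>_. S)"
  have MO: "prob_space MO" "sets MO = sets borel" "AE Q in MO. orthogonal_matrix Q"
    using haar unfolding is_haar_orth_def by auto
  have P: "prob_space ?P" using S by (intro prob_space_PiM) (simp add: is_unif_sphere_def)
  have isometric: "AE Q in MO. \<forall>\<psi>. norm (cmat Q *v \<psi>) = norm \<psi>"
    using MO(3) by (rule AE_mp) (auto intro!: AE_I2 simp: norm_unitary_mult unitary_mat_cmat)
  have "(\<integral>Q. ent_power S (cmat Q) \<partial>MO) = (\<integral>\<phi>. (D - conj_overlap (prod_state \<phi>)) * c \<partial>?P)"
    unfolding ent_power_def D_def c_def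
    by (rule Fubini_one_tangle_product_inputs[OF MO(1,2) S _ isometric integral_one_tangle_haar_orth[OF haar _ d]])
      (auto intro!: continuous_intros borel_measurable_continuous_onI continuous_on_conj_overlap)
  also have "\<dots> = (D - (\<integral>\<phi>. conj_overlap (prod_state \<phi>) \<partial>?P)) * c"
  proof -
    have "(\<integral>\<phi>. D - conj_overlap (prod_state \<phi>) \<partial>?P) = D - (\<integral>\<phi>. conj_overlap (prod_state \<phi>) \<partial>?P)"
      using integral_conj_overlap_prod_state(1)[OF S d] prob_space.prob_space[OF P]
      by (subst Bochner_Integration.integral_diff)
        (auto simp: prob_space.finite_measure[OF P] finite_measure.integrable_const)
    then show ?thesis by simp
  qed
  finally show ?thesis
    unfolding integral_conj_overlap_prod_state(2)[OF S d] D_def c_def .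
qed

lemma integral_ent_power_haar_unitary:
  fixes S :: "(complex^'d::finite) measure" and MU :: "(complex^('i::finite \<Rightarrow> 'd)^('i \<Rightarrow> 'd)) measure"
  assumes d: "CARD('d) \<ge> 2" and S: "is_unif_sphere S" and haar: "is_haar_unitary MU"
  shows "(\<integral>U. ent_power S U \<partial>MU) =
    (real CARD('d) ^ CARD('i) - 2 / (real CARD('d) ^ CARD('i) + 1)) * tangle_coeff CARD('i) (real CARD('d))"
proof -
  let ?P = "PiM (UNIV::'i set) (\<lambda>_. S)"
  have MU: "prob_space MU" "sets MU = sets borel" "AE U in MU. unitary_mat U"
    using haar unfolding is_haar_unitary_def by auto
  have P: "prob_space ?P" using S by (intro prob_space_PiM) (simp add: is_unif_sphere_def)
  have isometric: "AE U in MU. \<forall>\<psi>. norm (U *v \<psi>) = norm \<psi>"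
    using MU(3) by (rule AE_mp) (auto intro!: AE_I2 simp: norm_unitary_mult)
  have "(\<integral>U. ent_power S U \<partial>MU) = (\<integral>\<phi>. (real CARD('d) ^ CARD('i) - 2 / (real CARD('d) ^ CARD('i) + 1))
      * tangle_coeff CARD('i) (real CARD('d)) \<partial>?P)"
    unfolding ent_power_def
    by (rule Fubini_one_tangle_product_inputs[OF MU(1,2) S _ isometric integral_one_tangle_haar_unitary[OF haar _ d]])
      (auto intro!: continuous_intros)
  then show ?thesis using prob_space.prob_space[OF P] by simp
qed

lemma tangle_coeff_orth_closed_form:
  fixes d :: real
  assumes "d \<ge> 2" "N \<ge> 2"
  shows "(d ^ N - (2 / (d + 1)) ^ N) * tangle_coeff N d =
    ((2 ^ N * (d ^ N + 1) - 2 * (d + 1) ^ N) * (d ^ N * (d + 1) ^ N - 2 ^ N))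
      / ((2 ^ (N - 1) - 1) * (d ^ (2 * N) + d ^ N - 2) * (d + 1) ^ N)"
proof -
  have "(2::real) ^ 1 < 2 ^ N" "d ^ 1 \<le> d ^ N"
    using assms by (intro power_strict_increasing power_increasing; simp)+
  then have "(2::real) ^ (N - 1) - 1 \<noteq> 0" "(d ^ N)^2 + d ^ N - 2 \<noteq> 0" "(d + 1) ^ N \<noteq> 0"
    using assms power2_add_self_minus_2_pos[of "d ^ N"] by (auto simp: power_diff)
  then show ?thesis
    by (simp add: tangle_coeff_def power_divide power_mult power2_eq_square field_simps)
qed

lemma tangle_coeff_unitary_closed_form:
  fixes d :: real
  assumes "d \<ge> 2" "N \<ge> 2"
  shows "(d ^ N - 2 / (d ^ N + 1)) * tangle_coeff N d =
    (2 ^ N * (d ^ N + 1) - 2 * (d + 1) ^ N) / ((2 ^ (N - 1) - 1) * (d ^ N + 1))"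
proof -
  define D where "D = d ^ N"
  have "(2::real) ^ 1 < 2 ^ N" "d ^ 1 \<le> d ^ N"
    using assms by (intro power_strict_increasing power_increasing; simp)+
  then have K: "(2::real) ^ (N - 1) - 1 \<noteq> 0" and E: "D^2 + D - 2 \<noteq> 0" and D1: "D + 1 \<noteq> 0"
    using assms power2_add_self_minus_2_pos[of D] by (auto simp: power_diff D_def)
  have "D - 2 / (D + 1) = (D^2 + D - 2) / (D + 1)"
    using D1 by (simp add: field_simps power2_eq_square)
  then show ?thesis
    using K E D1 unfolding tangle_coeff_def D_def[symmetric] by simp
qed

theorem mainTheorem11:
  fixes S :: "(complex^'d::finite) measure"
    and MU :: "(complex^('i::finite \<Rightarrow> 'd)^('i \<Rightarrow> 'd)) measure"
    and MO :: "(real^('i \<Rightarrow> 'd)^('i \<Rightarrow> 'd)) measure"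
  assumes "CARD('i) \<ge> 2" and "CARD('d) \<ge> 2"
    and "is_unif_sphere S" and "is_haar_orth MO" and "is_haar_unitary MU"
  shows "(\<integral>Q. ent_power S (cmat Q) \<partial>MO) =
           ((2 ^ CARD('i) * (real CARD('d) ^ CARD('i) + 1) - 2 * (real CARD('d) + 1) ^ CARD('i))
             * (real CARD('d) ^ CARD('i) * (real CARD('d) + 1) ^ CARD('i) - 2 ^ CARD('i)))
           / ((2 ^ (CARD('i) - 1) - 1)
              * (real CARD('d) ^ (2 * CARD('i)) + real CARD('d) ^ CARD('i) - 2)
              * (real CARD('d) + 1) ^ CARD('i)) \<and>
         (\<integral>U. ent_power S U \<partial>MU) =
           (2 ^ CARD('i) * (real CARD('d) ^ CARD('i) + 1) - 2 * (real CARD('d) + 1) ^ CARD('i))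
           / ((2 ^ (CARD('i) - 1) - 1) * (real CARD('d) ^ CARD('i) + 1))"
proof -
  have d: "real CARD('d) \<ge> 2" using assms(2) by simp
  show ?thesis
    unfolding integral_ent_power_haar_orth[OF assms(2-4)] integral_ent_power_haar_unitary[OF assms(2,3,5)]
      tangle_coeff_orth_closed_form[OF d assms(1)] tangle_coeff_unitary_closed_form[OF d assms(1)]
    by simp
qed

end
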